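(* Let $L$ be a finite-dimensional pure, nonnilpotent, solvable Lie algebra over $\mathbb{C}$ of breadth $2$ such that $\dim[L,L]=3$ and $\dim\big(L/Z(L)\big)=3$. Then $L$ has a basis $\{x_1,x_2,x_3,z\}$ in which the only nonzero brackets of basis elements (up to antisymmetry) are $[x_1,x_2]=x_2$, $[x_1,x_3]=-x_3$ and $[x_2,x_3]=z$.
   Context: For $x\in L$, the breadth of $x$ is $b(x)=\mathrm{rank}(\mathrm{ad}_x)$, and the breadth of $L$ is $b(L)=\max\{b(x)\mid x\in L\}$. A Lie algebra $L$ is pure (or stem) if it has no abelian ideal as a direct summand; equivalently $Z(L)\subseteq[L,L]$. $Z(L)$ denotes the center of $L$. *)

theory Defs
  imports "HOL-Analysis.Analysis"
begin

definition lie_algebra :: "(complex \<Rightarrow> 'a::ab_group_add \<Rightarrow> 'a) \<Rightarrow> ('a \<Rightarrow> 'a \<Rightarrow> 'a) \<Rightarrow> bool" where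
  "lie_algebra sc br \<longleftrightarrow>
     vector_space sc \<and>
     (\<forall>x. Vector_Spaces.linear sc sc (br x)) \<and>
     (\<forall>y. Vector_Spaces.linear sc sc (\<lambda>x. br x y)) \<and>
     (\<forall>x. br x x = 0) \<and>
     (\<forall>x y z. br x (br y z) + br y (br z x) + br z (br x y) = 0)"

definition fin_dim_space :: "(complex \<Rightarrow> 'a::ab_group_add \<Rightarrow> 'a) \<Rightarrow> bool" where
  "fin_dim_space sc \<longleftrightarrow> (\<exists>B. finite B \<and> module.span sc B = UNIV)"

definition lie_br_set :: "(complex \<Rightarrow> 'a::ab_group_add \<Rightarrow> 'a) \<Rightarrow> ('a \<Rightarrow> 'a \<Rightarrow> 'a) \<Rightarrow> 'a set \<Rightarrow> 'a set \<Rightarrow> 'a set" where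
  "lie_br_set sc br A B = module.span sc {br a b | a b. a \<in> A \<and> b \<in> B}"

definition lie_center :: "('a \<Rightarrow> 'a \<Rightarrow> 'a::ab_group_add) \<Rightarrow> 'a set" where
  "lie_center br = {z. \<forall>x. br z x = 0}"

fun lower_central :: "(complex \<Rightarrow> 'a::ab_group_add \<Rightarrow> 'a) \<Rightarrow> ('a \<Rightarrow> 'a \<Rightarrow> 'a) \<Rightarrow> nat \<Rightarrow> 'a set" where
  "lower_central sc br 0 = UNIV"
| "lower_central sc br (Suc k) = lie_br_set sc br UNIV (lower_central sc br k)"

fun derived_series :: "(complex \<Rightarrow> 'a::ab_group_add \<Rightarrow> 'a) \<Rightarrow> ('a \<Rightarrow> 'a \<Rightarrow> 'a) \<Rightarrow> nat \<Rightarrow> 'a set" where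
  "derived_series sc br 0 = UNIV"
| "derived_series sc br (Suc k) = lie_br_set sc br (derived_series sc br k) (derived_series sc br k)"

definition lie_nilpotent where
  "lie_nilpotent sc br \<longleftrightarrow> (\<exists>k. lower_central sc br k = {0})"

definition lie_solvable where
  "lie_solvable sc br \<longleftrightarrow> (\<exists>k. derived_series sc br k = {0})"

definition lie_pure where
  "lie_pure sc br \<longleftrightarrow> lie_center br \<subseteq> lie_br_set sc br UNIV UNIV"

definition elem_breadth :: "(complex \<Rightarrow> 'a::ab_group_add \<Rightarrow> 'a) \<Rightarrow> ('a \<Rightarrow> 'a \<Rightarrow> 'a) \<Rightarrow> 'a \<Rightarrow> nat" where
  "elem_breadth sc br x = vector_space.dim sc (range (br x))"

definition lie_breadth :: "(complex \<Rightarrow> 'a::ab_group_add \<Rightarrow> 'a) \<Rightarrow> ('a \<Rightarrow> 'a \<Rightarrow> 'a) \<Rightarrow> nat" where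
  "lie_breadth sc br = Max (range (elem_breadth sc br))"

end

(*
  Let Z be the centre and D = [L, L].  Purity gives Z <= D, solvability gives D <> L and
  non-nilpotency gives [L, D] not inside Z; with dim D = 3 and dim L/Z = 3 this leaves
  dim Z = 1 or dim Z = 2.  Whenever L = span {x, y, w} + Z, the space D is spanned by
  [x, y], [x, w], [y, w], so these three brackets are linearly independent; both cases are
  settled by this observation and the Jacobi identity.

  If dim Z = 2 then D = C d + Z, and the Jacobi identity for x, y, d makes [x, d] and [y, d]
  proportional, a contradiction.  If dim Z = 1, write D = span {d1, d2} + Z and L = C x + D.
  The Jacobi identity for x, d1, d2 shows that [d1, d2] spans Z and that ad x induces a
  traceless map on D/Z, which independence makes invertible.  Its eigenvectors for the
  eigenvalues mu and -mu lift to eigenvectors y, y' of ad x, and x/mu, y, y', [y, y'] is the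
  required basis.
*)

theory Submission
  imports Defs
begin

no_notation vector_scalar_mult (infixl "*s" 70)

(* (p, q) is a row vector acted on by the traceless matrix with rows (a, c) and (b, -a),
   whose determinant is -(a * a + b * c). *)
lemma traceless_2x2_singular_kernel:
  fixes a b c :: complex
  assumes "a * a + b * c = 0"
  obtains p q where "(p, q) \<noteq> (0, 0)" "p * a + q * b = 0" "p * c - q * a = 0"
proof (cases "a = 0 \<and> b = 0")
  case True
  then show ?thesis using that[of 0 1] by simp
next
  case False
  then show ?thesis using that[of b "- a"] assms by (auto simp: algebra_simps)
qed

lemma traceless_2x2_eigenbasis:
  fixes a b c :: complex
  assumes "a * a + b * c \<noteq> 0"
  obtains \<mu> p q p' q' where "\<mu> \<noteq> 0"
    "p * a + q * b = \<mu> * p" "p * c - q * a = \<mu> * q"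
    "p' * a + q' * b = - \<mu> * p'" "p' * c - q' * a = - \<mu> * q'"
    "p * q' - q * p' \<noteq> 0"
proof (cases "b = 0")
  case True
  then show ?thesis using that[of a "2 * a" c 0 1] assms by (auto simp: algebra_simps)
next
  case False
  define \<mu> where "\<mu> = csqrt (a * a + b * c)"
  have \<mu>_sq: "\<mu> * \<mu> = a * a + b * c"
    unfolding \<mu>_def by (metis power2_csqrt power2_eq_square)
  with assms have "\<mu> \<noteq> 0" by auto
  moreover have "b * (- \<mu> - a) - (\<mu> - a) * b = - 2 * \<mu> * b"
    by (simp add: algebra_simps)
  ultimately show ?thesis
    by (intro that[of \<mu> b "\<mu> - a" b "- \<mu> - a"]) (use \<mu>_sq False in \<open>auto simp: algebra_simps\<close>)
qed

context vector_space
begin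

lemma in_span_insertE:
  assumes "v \<in> span (insert p S)"
  obtains \<alpha> w where "w \<in> span S" "v = \<alpha> *s p + w"
  using assms span_breakdown_eq by (metis add.commute diff_add_cancel)

lemma in_span_insert2E:
  assumes "v \<in> span (insert p (insert q S))"
  obtains \<alpha> \<beta> w where "w \<in> span S" "v = \<alpha> *s p + \<beta> *s q + w"
proof -
  obtain \<alpha> u where "u \<in> span (insert q S)" "v = \<alpha> *s p + u"
    using assms by (rule in_span_insertE)
  moreover obtain \<beta> w where "w \<in> span S" "u = \<beta> *s q + w"
    using calculation(1) by (rule in_span_insertE)
  ultimately show ?thesis
    using that by (simp add: add.assoc)
qed

lemma span_insert_cong: "span A = span B \<Longrightarrow> span (insert x A) = span (insert x B)"
  by (simp add: span_insert)

lemma independent_triple_coeffs_zero: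
  assumes "independent {u, v, w}" "distinct [u, v, w]"
    and "\<alpha> *s u + \<beta> *s v + \<gamma> *s w = 0"
  shows "\<alpha> = 0 \<and> \<beta> = 0 \<and> \<gamma> = 0"
proof -
  let ?c = "\<lambda>t. if t = u then \<alpha> else if t = v then \<beta> else \<gamma>"
  have "(\<Sum>t\<in>{u, v, w}. ?c t *s t) = 0"
    using assms(2,3) by (auto simp: add.assoc)
  then have "?c t = 0" if "t \<in> {u, v, w}" for t
    using independent_explicit_module[THEN iffD1, OF assms(1), rule_format, of "{u, v, w}" ?c t] that
    by simp
  from this[of u] this[of v] this[of w] show ?thesis
    using assms(2) by auto
qed

lemma span_insert2_change_basis:
  assumes y: "y = p *s d + q *s e + u" and y': "y' = p' *s d + q' *s e + u'"
    and "u \<in> span S" "u' \<in> span S" "p * q' - q * p' \<noteq> 0"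
  shows "span (insert y (insert y' S)) = span (insert d (insert e S))"
proof -
  let ?\<delta> = "p * q' - q * p'" and ?T = "insert y (insert y' S)" and ?T' = "insert d (insert e S)"
  have d: "?\<delta> *s d = q' *s y - q *s y' - (q' *s u - q *s u')"
    and e: "?\<delta> *s e = p *s y' - p' *s y - (p *s u' - p' *s u)"
    unfolding y y' by (simp_all add: algebra_simps)
  have "u \<in> span ?T" "u' \<in> span ?T" "y \<in> span ?T" "y' \<in> span ?T"
    using assms(3,4) span_mono[of S ?T] by (auto intro: span_base)
  then have "?\<delta> *s d \<in> span ?T" "?\<delta> *s e \<in> span ?T"
    unfolding d e by (auto intro!: span_scale span_diff)
  then have "d \<in> span ?T" "e \<in> span ?T"
    using span_scale[of "?\<delta> *s d" ?T "1 / ?\<delta>"] span_scale[of "?\<delta> *s e" ?T "1 / ?\<delta>"] assms(5)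
    by simp_all
  then have "?T' \<subseteq> span ?T"
    using span_mono[of S ?T] span_superset[of S] by auto
  have "u \<in> span ?T'" "u' \<in> span ?T'" "d \<in> span ?T'" "e \<in> span ?T'"
    using assms(3,4) span_mono[of S ?T'] by (auto intro: span_base)
  then have "y \<in> span ?T'" "y' \<in> span ?T'"
    unfolding y y' by (auto intro!: span_scale span_add)
  then have "?T \<subseteq> span ?T'"
    using span_mono[of S ?T'] span_superset[of S] by auto
  with \<open>?T' \<subseteq> span ?T\<close> show ?thesis
    unfolding span_eq by blast
qed

end

context finite_dimensional_vector_space
begin

lemma spanning_list_distinct_independent:
  assumes "set xs \<subseteq> V" "V \<subseteq> span (set xs)" "length xs \<le> dim V"
  shows "distinct xs \<and> independent (set xs)"
proof -
  have "dim V \<le> card (set xs)"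
    using assms(2) by (rule dim_le_card) simp
  then have "card (set xs) = length xs"
    using card_length[of xs] assms(3) by simp
  then show ?thesis
    using card_distinct card_le_dim_spanning[OF assms(1,2)] assms(3) by auto
qed

lemma dim_less_obtain_insert:
  assumes "dim S < dim V"
  obtains v where "v \<in> V" "dim (insert v S) = Suc (dim S)"
proof -
  obtain v where "v \<in> V" "v \<notin> span S"
    using dim_mono assms by (meson leD subsetI)
  with that show ?thesis
    by (simp add: dim_insert)
qed

end

locale fin_dim_lie_algebra = finite_dimensional_vector_space sc Basis
  for sc :: "complex \<Rightarrow> 'a::ab_group_add \<Rightarrow> 'a" (infixr "*s" 75) and Basis :: "'a set" +
  fixes br :: "'a \<Rightarrow> 'a \<Rightarrow> 'a"
  assumes linear_br_right: "\<And>x. Vector_Spaces.linear sc sc (br x)"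
    and linear_br_left: "\<And>y. Vector_Spaces.linear sc sc (\<lambda>x. br x y)"
    and br_self [simp]: "\<And>x. br x x = 0"
    and jacobi: "\<And>x y z. br x (br y z) + br y (br z x) + br z (br x y) = 0"
begin

lemmas br_right_hom = linear_br_right[unfolded linear_iff_module_hom]
lemmas br_left_hom = linear_br_left[unfolded linear_iff_module_hom]

lemmas br_right_simps [simp] =
  module_hom.add[OF br_right_hom] module_hom.scale[OF br_right_hom] module_hom.zero[OF br_right_hom]
  module_hom.neg[OF br_right_hom] module_hom.diff[OF br_right_hom]

lemmas br_left_simps [simp] =
  module_hom.add[OF br_left_hom] module_hom.scale[OF br_left_hom] module_hom.zero[OF br_left_hom]
  module_hom.neg[OF br_left_hom] module_hom.diff[OF br_left_hom]

lemma br_anticomm: "br y x = - br x y"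
proof -
  have "br (x + y) (x + y) = br x x + br y x + (br x y + br y y)"
    by (simp only: br_left_simps br_right_simps)
  then have "br y x + br x y = 0"
    by simp
  then show ?thesis
    by (simp add: eq_neg_iff_add_eq_0)
qed

abbreviation "center \<equiv> lie_center br"
abbreviation "derived \<equiv> lie_br_set sc br UNIV UNIV"

lemma br_center_left [simp]: "z \<in> center \<Longrightarrow> br z x = 0"
  unfolding lie_center_def by simp

lemma br_center_right [simp]: "z \<in> center \<Longrightarrow> br x z = 0"
  using br_anticomm[of z x] by simp

lemma subspace_center: "subspace center"
  unfolding subspace_def lie_center_def by simp

lemma span_center [simp]: "span center = center"
  by (simp add: span_eq_iff subspace_center)

lemma br_in_derived [simp]: "br x y \<in> derived"
  unfolding lie_br_set_def by (rule span_base) blast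

lemma span_derived [simp]: "span derived = derived"
  unfolding lie_br_set_def by (rule span_span)

lemma br_in_subspace_spans:
  assumes "subspace S" "a \<in> span A" "b \<in> span B" "\<And>u v. u \<in> A \<Longrightarrow> v \<in> B \<Longrightarrow> br u v \<in> S"
  shows "br a b \<in> S"
proof -
  have "br u b \<in> S" if "u \<in> A" for u
  proof -
    have "br u b \<in> br u ` span B"
      using assms(3) by blast
    also have "\<dots> = span (br u ` B)"
      by (rule module_hom.span_image[OF br_right_hom, symmetric])
    also have "\<dots> \<subseteq> S"
      using assms(1,4) that by (intro span_minimal) auto
    finally show ?thesis .
  qed
  then have "(\<lambda>x. br x b) a \<in> span ((\<lambda>x. br x b) ` A)"
    using module_hom.span_image[OF br_left_hom] assms(2) by auto
  also have "\<dots> \<subseteq> S"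
    using assms(1) \<open>\<And>u. u \<in> A \<Longrightarrow> br u b \<in> S\<close> by (intro span_minimal) auto
  finally show ?thesis .
qed

lemma derived_subset_span_brackets_mod_center:
  assumes "span (insert x (insert y (insert w center))) = UNIV"
  shows "derived \<subseteq> span {br x y, br x w, br y w}"
  unfolding lie_br_set_def
proof (rule span_minimal; clarify)
  fix a b
  let ?G = "insert x (insert y (insert w center))" and ?T = "{br x y, br x w, br y w}"
  have "br u v \<in> span ?T" if "u \<in> {x, y, w}" "v \<in> {x, y, w}" for u v
  proof -
    have "br y x \<in> span ?T" "br w x \<in> span ?T" "br w y \<in> span ?T"
      unfolding br_anticomm[of y x] br_anticomm[of w x] br_anticomm[of w y]
      by (simp_all add: span_neg span_base)
    then show ?thesis
      using that by (auto simp: span_base span_zero)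
  qed
  then have generators: "br u v \<in> span ?T" if "u \<in> ?G" "v \<in> ?G" for u v
    using that by (cases "u \<in> center \<or> v \<in> center") (auto simp: span_zero)
  have "a \<in> span ?G" "b \<in> span ?G"
    using assms by simp_all
  then show "br a b \<in> span ?T"
    by (rule br_in_subspace_spans[OF subspace_span _ _ generators])
qed

lemma lie_br_set_UNIV_eq_0_if_central:
  assumes "S \<subseteq> center"
  shows "lie_br_set sc br UNIV S = {0}"
proof -
  have "{br a b |a b. a \<in> UNIV \<and> b \<in> S} \<subseteq> {0}"
    using assms by auto
  then show ?thesis
    unfolding lie_br_set_def using span_zero span_minimal[of _ "{0}"] subspace_single_0 by blast
qed

lemma not_nilpotent_obtain_noncentral_bracket:
  assumes "\<not> lie_nilpotent sc br"
  obtains a b where "b \<in> derived" "br a b \<notin> center"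
proof (rule ccontr)
  assume "\<not> thesis"
  have "lower_central sc br 2 = span {br a b |a b. a \<in> UNIV \<and> b \<in> derived}"
    by (simp add: numeral_2_eq_2 lie_br_set_def)
  also have "\<dots> \<subseteq> center"
    using that \<open>\<not> thesis\<close> by (intro span_minimal subspace_center) blast
  finally have "lower_central sc br 2 \<subseteq> center" .
  have "lower_central sc br 3 = lie_br_set sc br UNIV (lower_central sc br 2)"
    by (simp add: numeral_3_eq_3 numeral_2_eq_2)
  also have "\<dots> = {0}"
    using \<open>lower_central sc br 2 \<subseteq> center\<close> by (rule lie_br_set_UNIV_eq_0_if_central)
  finally show False
    using assms
    unfolding lie_nilpotent_def by blast
qed

lemma solvable_derived_ne_UNIV:
  assumes "lie_solvable sc br" "derived \<noteq> {0}"
  shows "derived \<noteq> UNIV"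
proof
  assume "derived = UNIV"
  then have "derived_series sc br k = UNIV" for k
    by (induction k) simp_all
  with assms(1) have "derived \<subseteq> {0}"
    unfolding lie_solvable_def by auto
  moreover have "0 \<in> derived"
    using span_zero[of derived] by simp
  ultimately show False
    using assms(2) by blast
qed

lemma derived_brackets_coeffs_zero:
  assumes "span (insert x (insert y (insert w center))) = UNIV" "dim derived = 3"
    and "\<alpha> *s br x y + \<beta> *s br x w + \<gamma> *s br y w = 0"
  shows "\<alpha> = 0 \<and> \<beta> = 0 \<and> \<gamma> = 0"
proof -
  have "distinct [br x y, br x w, br y w] \<and> independent {br x y, br x w, br y w}"
    using spanning_list_distinct_independent[of "[br x y, br x w, br y w]" derived]
      derived_subset_span_brackets_mod_center[OF assms(1)] assms(2) by simp
  then show ?thesis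
    using independent_triple_coeffs_zero assms(3) by blast
qed

lemma dim_center_eq_1_or_2:
  assumes "lie_pure sc br" "\<not> lie_nilpotent sc br" "lie_solvable sc br" "dim derived = 3"
    and "dim (UNIV :: 'a set) = dim center + 3"
  shows "dim center = 1 \<or> dim center = 2"
proof -
  have "derived \<noteq> {0}"
    using assms(4) dim_singleton[of 0] by (metis zero_neq_numeral)
  then have "span derived \<subset> span UNIV"
    using solvable_derived_ne_UNIV[OF assms(3)] by auto
  then have "dim derived < dim (UNIV :: 'a set)"
    by (rule dim_psubset)
  moreover obtain a b where "b \<in> derived" "br a b \<notin> center"
    by (rule not_nilpotent_obtain_noncentral_bracket[OF assms(2)])
  then have "b \<in> derived - center"
    using subspace_center by (auto simp: subspace_0)
  then have "span center \<subset> span derived"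
    using assms(1) unfolding lie_pure_def by auto
  then have "dim center < dim derived"
    by (rule dim_psubset)
  ultimately show ?thesis
    using assms(4,5) by linarith
qed

lemma br_proportional_if_derived_line_mod_center:
  assumes "br x y \<in> span (insert d center)"
    and "br x d = l *s d + w" "br y d = m *s d + w'" "w \<in> center" "w' \<in> center"
  shows "m *s br x d = l *s br y d"
proof -
  obtain \<alpha> u where "u \<in> span center" and xy: "br x y = \<alpha> *s d + u"
    using assms(1) by (rule in_span_insertE)
  then have "m *s w - l *s w' = br x (br y d) + br y (br d x) + br d (br x y)"
    using assms(4,5) by (simp add: xy assms(2,3) br_anticomm[of d x] algebra_simps)
  also have "\<dots> = 0"
    by (rule jacobi)
  finally show ?thesis
    by (simp add: assms(2,3) algebra_simps)
qed

lemma not_nilpotent_obtain_noncentral_bracket_with: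
  assumes "\<not> lie_nilpotent sc br" "span (insert d center) = derived"
  obtains a where "br a d \<notin> center"
proof -
  obtain a b where "b \<in> derived" "br a b \<notin> center"
    by (rule not_nilpotent_obtain_noncentral_bracket[OF assms(1)])
  moreover obtain \<beta> u where "u \<in> span center" "b = \<beta> *s d + u"
    by (rule in_span_insertE[of b d center]) (use calculation(1) assms(2) in simp)
  ultimately have "br a d \<notin> center"
    using subspace_center by (auto simp: subspace_scale)
  then show ?thesis
    by (rule that)
qed

lemma dim_center_ne_2:
  assumes "lie_pure sc br" "\<not> lie_nilpotent sc br" "dim derived = 3"
    and "dim (UNIV :: 'a set) = dim center + 3"
  shows "dim center \<noteq> 2"
proof
  assume dim_center: "dim center = 2"
  obtain d where "d \<in> derived" "dim (insert d center) = 3"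
    using dim_less_obtain_insert[of center derived] dim_center assms(3) by auto
  then have line: "span (insert d center) = derived"
    using dim_eq_span[of "insert d center" derived] assms(1,3) unfolding lie_pure_def by auto
  have coords: "\<exists>\<alpha> w. w \<in> center \<and> v = \<alpha> *s d + w" if v: "v \<in> derived" for v
  proof -
    obtain \<alpha> w where "w \<in> span center" "v = \<alpha> *s d + w"
      by (rule in_span_insertE[of v d center]) (use v line in simp)
    then show ?thesis
      by auto
  qed
  obtain a where x: "br a d \<notin> center"
    by (rule not_nilpotent_obtain_noncentral_bracket_with[OF assms(2) line])
  obtain l w where w: "w \<in> center" and ad: "br a d = l *s d + w"
    using coords[OF br_in_derived] by blast
  with x have "l \<noteq> 0"
    by auto
  have "a \<notin> span (insert d center)"
  proof
    assume "a \<in> span (insert d center)"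
    then obtain \<alpha> u where "u \<in> center" "a = \<alpha> *s d + u"
      using coords line by blast
    then have "br a d = 0"
      by simp
    with x show False
      using subspace_center by (simp add: subspace_0)
  qed
  then have "dim (insert a (insert d center)) = 4"
    using \<open>dim (insert d center) = 3\<close> by (simp add: dim_insert)
  then obtain y where "dim (insert y (insert a (insert d center))) = 5"
    using dim_less_obtain_insert[of "insert a (insert d center)" UNIV] assms(4) dim_center by auto
  then have full: "span (insert a (insert y (insert d center))) = UNIV"
    using dim_eq_full assms(4) dim_center by (simp add: dimension_def insert_commute)
  obtain m w' where w': "w' \<in> center" and ad': "br y d = m *s d + w'"
    using coords[OF br_in_derived] by blast
  have "m *s br a d = l *s br y d"
    using br_proportional_if_derived_line_mod_center[OF _ ad ad' w w'] line by simp
  then have "0 *s br a y + m *s br a d + (- l) *s br y d = 0"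
    by simp
  from derived_brackets_coeffs_zero[OF full assms(3) this] \<open>l \<noteq> 0\<close> show False
    by simp
qed

lemma center_eq_span_if_dim_1:
  assumes "dim center = 1" "z \<in> center" "z \<noteq> 0"
  shows "center = span {z}"
proof -
  have "dim {z} = 1"
    using assms(3) by (simp add: dim_insert)
  then have "span {z} = span center"
    using assms by (intro dim_eq_span) auto
  then show ?thesis
    by simp
qed

definition diamond_basis :: "'a \<Rightarrow> 'a \<Rightarrow> 'a \<Rightarrow> 'a \<Rightarrow> bool" where
  "diamond_basis x1 x2 x3 z \<longleftrightarrow>
     distinct [x1, x2, x3, z] \<and> independent {x1, x2, x3, z} \<and> span {x1, x2, x3, z} = UNIV \<and>
     br x1 x2 = x2 \<and> br x1 x3 = - x3 \<and> br x2 x3 = z \<and>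
     br x1 z = 0 \<and> br x2 z = 0 \<and> br x3 z = 0"

lemma diamond_basis_of_eigenvectors:
  assumes "span {x, y, y', z} = UNIV" "dim (UNIV :: 'a set) = 4" "\<mu> \<noteq> 0"
    and "br x y = \<mu> *s y" "br x y' = - \<mu> *s y'" "br y y' = z" "z \<in> center"
  shows "diamond_basis ((1 / \<mu>) *s x) y y' z"
proof -
  let ?B = "[(1 / \<mu>) *s x, y, y', z]"
  have "x = \<mu> *s ((1 / \<mu>) *s x)"
    using assms(3) by simp
  then have "x \<in> span (set ?B)"
    by (metis list.set_intros(1) span_base span_scale)
  then have "{x, y, y', z} \<subseteq> span (set ?B)"
    by (auto intro: span_base)
  then have "span (set ?B) = UNIV"
    using span_minimal[OF _ subspace_span] assms(1) by (metis top.extremum_uniqueI)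
  moreover from this have "distinct ?B \<and> independent (set ?B)"
    using spanning_list_distinct_independent[of ?B UNIV] assms(2) by simp
  ultimately show ?thesis
    unfolding diamond_basis_def using assms(3-7) by simp
qed

lemma br_eigenvector_mod_center:
  assumes "br x d1 = a *s d1 + c *s d2 + w1" "br x d2 = b *s d1 - a *s d2 + w2"
    and "w1 \<in> center" "w2 \<in> center"
    and "\<nu> \<noteq> 0" "p * a + q * b = \<nu> * p" "p * c - q * a = \<nu> * q"
    and y: "y = p *s d1 + q *s d2 + (1 / \<nu>) *s (p *s w1 + q *s w2)"
  shows "br x y = \<nu> *s y"
proof -
  have "br x y = (p * a + q * b) *s d1 + (p * c - q * a) *s d2 + (p *s w1 + q *s w2)"
    unfolding y by (simp add: assms(1-4) algebra_simps)
  also have "\<dots> = \<nu> *s y"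
    unfolding y assms(6,7) using assms(5) by (simp add: algebra_simps)
  finally show ?thesis .
qed

lemma ad_traceless_mod_center:
  assumes "span (insert x (insert d1 (insert d2 center))) = UNIV" "dim derived = 3"
    and "br x d1 = a *s d1 + c *s d2 + w1" "br x d2 = b *s d1 + e *s d2 + w2"
    and "br d1 d2 = f *s d1 + g *s d2 + w3"
    and "w1 \<in> center" "w2 \<in> center" "w3 \<in> center"
  shows "f = 0 \<and> g = 0 \<and> e = - a"
proof -
  have "f *s br x d1 + g *s br x d2 + (- (a + e)) *s br d1 d2
      = br x (br d1 d2) + br d1 (br d2 x) + br d2 (br x d1)"
    using assms(6-8)
    by (simp add: assms(3-5) br_anticomm[of d2 x] br_anticomm[of d2 d1] algebra_simps)
  also have "\<dots> = 0"
    by (rule jacobi)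
  finally have "f = 0 \<and> g = 0 \<and> - (a + e) = 0"
    by (rule derived_brackets_coeffs_zero[OF assms(1,2)])
  then show ?thesis
    by (simp add: eq_neg_iff_add_eq_0 add.commute)
qed

lemma ad_nondegenerate_mod_center:
  assumes "span (insert x (insert d1 (insert d2 center))) = UNIV" "dim derived = 3" "dim center = 1"
    and "br x d1 = a *s d1 + c *s d2 + w1" "br x d2 = b *s d1 - a *s d2 + w2"
    and "w1 \<in> center" "w2 \<in> center" "br d1 d2 \<in> center"
  shows "a * a + b * c \<noteq> 0"
proof
  assume "a * a + b * c = 0"
  then obtain p q where pq: "(p, q) \<noteq> (0, 0)" "p * a + q * b = 0" "p * c - q * a = 0"
    by (rule traceless_2x2_singular_kernel)
  have "br d1 d2 \<noteq> 0"
    using derived_brackets_coeffs_zero[OF assms(1,2), of 0 0 1] by auto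
  then have center: "center = span {br d1 d2}"
    using center_eq_span_if_dim_1 assms(3,8) by blast
  have "p *s br x d1 + q *s br x d2
      = (p * a + q * b) *s d1 + (p * c - q * a) *s d2 + (p *s w1 + q *s w2)"
    by (simp add: assms(4,5) algebra_simps)
  also have "\<dots> \<in> center"
    using pq(2,3) assms(6,7) subspace_center by (simp add: subspace_add subspace_scale)
  finally obtain k where "p *s br x d1 + q *s br x d2 = k *s br d1 d2"
    unfolding center span_singleton by blast
  then have "p *s br x d1 + q *s br x d2 + (- k) *s br d1 d2 = 0"
    by simp
  from derived_brackets_coeffs_zero[OF assms(1,2) this] pq(1) show False
    by simp
qed

lemma diamond_basis_if_ad_nondegenerate:
  assumes full: "span (insert x (insert d1 (insert d2 center))) = UNIV"
    and "dim (UNIV :: 'a set) = 4" "dim center = 1"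
    and ad: "br x d1 = a *s d1 + c *s d2 + w1" "br x d2 = b *s d1 - a *s d2 + w2"
    and w: "w1 \<in> center" "w2 \<in> center"
    and "br d1 d2 \<in> center" "br d1 d2 \<noteq> 0" "a * a + b * c \<noteq> 0"
  shows "\<exists>x1 x2 x3 z. diamond_basis x1 x2 x3 z"
proof -
  obtain \<mu> p q p' q' where eig: "\<mu> \<noteq> 0"
    "p * a + q * b = \<mu> * p" "p * c - q * a = \<mu> * q"
    "p' * a + q' * b = - \<mu> * p'" "p' * c - q' * a = - \<mu> * q'" "p * q' - q * p' \<noteq> 0"
    by (rule traceless_2x2_eigenbasis[OF assms(10)])
  define y where "y = p *s d1 + q *s d2 + (1 / \<mu>) *s (p *s w1 + q *s w2)"
  define y' where "y' = p' *s d1 + q' *s d2 + (1 / - \<mu>) *s (p' *s w1 + q' *s w2)"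
  have eig_y: "br x y = \<mu> *s y"
    by (rule br_eigenvector_mod_center[OF ad w eig(1-3) y_def])
  have eig_y': "br x y' = - \<mu> *s y'"
    by (rule br_eigenvector_mod_center[OF ad w _ eig(4,5) y'_def]) (use eig(1) in simp)
  have "br y y' = (p * q' - q * p') *s br d1 d2"
    unfolding y_def y'_def using w by (simp add: br_anticomm[of d2 d1] algebra_simps)
  then have central: "br y y' \<in> center" "br y y' \<noteq> 0"
    using assms(8,9) eig(6) subspace_center by (simp_all add: subspace_scale)
  have change: "span (insert y (insert y' center)) = span (insert d1 (insert d2 center))"
    by (rule span_insert2_change_basis[OF y_def y'_def _ _ eig(6)])
      (use w subspace_center in \<open>simp_all add: subspace_add subspace_scale subspace_neg\<close>)
  have "span (insert x (insert y (insert y' center))) = UNIV"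
    using span_insert_cong[OF change, of x] full by simp
  moreover have "center \<subseteq> span {x, y, y', br y y'}"
    unfolding center_eq_span_if_dim_1[OF assms(3) central] by (rule span_mono) auto
  then have "insert x (insert y (insert y' center)) \<subseteq> span {x, y, y', br y y'}"
    by (simp add: span_base)
  ultimately have "span {x, y, y', br y y'} = UNIV"
    using span_minimal[OF _ subspace_span] by blast
  then have "diamond_basis ((1 / \<mu>) *s x) y y' (br y y')"
    using diamond_basis_of_eigenvectors[OF _ assms(2) eig(1) eig_y eig_y' refl central(1)] by blast
  then show ?thesis
    by blast
qed

lemma dim_center_1_obtain_basis:
  assumes "lie_pure sc br" "dim center = 1" "dim derived = 3" "dim (UNIV :: 'a set) = 4"
  obtains x d1 d2 where "span (insert d1 (insert d2 center)) = derived"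
    "span (insert x (insert d1 (insert d2 center))) = UNIV"
proof -
  have "dim center < dim derived"
    using assms(2,3) by simp
  then obtain d1 where "d1 \<in> derived" "dim (insert d1 center) = Suc (dim center)"
    by (rule dim_less_obtain_insert)
  then have "d1 \<in> derived" "dim (insert d1 center) = 2"
    using assms(2) by simp_all
  moreover obtain d2 where "d2 \<in> derived" "dim (insert d2 (insert d1 center)) = 3"
    using dim_less_obtain_insert[of "insert d1 center" derived] calculation(2) assms(3) by auto
  ultimately have derived: "span (insert d1 (insert d2 center)) = derived"
    using dim_eq_span[of "insert d2 (insert d1 center)" derived] assms(1,3)
    unfolding lie_pure_def by (simp add: insert_commute)
  have "dim (insert d1 (insert d2 center)) = 3"
    using dim_span[of "insert d1 (insert d2 center)"] derived assms(3) by simp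
  then obtain x where "dim (insert x (insert d1 (insert d2 center))) = 4"
    using dim_less_obtain_insert[of "insert d1 (insert d2 center)" UNIV] assms(4) by auto
  then have "span (insert x (insert d1 (insert d2 center))) = UNIV"
    using dim_eq_full assms(4) by (simp add: dimension_def)
  with derived show ?thesis
    by (rule that)
qed

lemma diamond_basis_if_dim_center_1:
  assumes "lie_pure sc br" "dim center = 1" "dim derived = 3" "dim (UNIV :: 'a set) = 4"
  shows "\<exists>x1 x2 x3 z. diamond_basis x1 x2 x3 z"
proof -
  obtain x d1 d2 where derived: "span (insert d1 (insert d2 center)) = derived"
    and full: "span (insert x (insert d1 (insert d2 center))) = UNIV"
    by (rule dim_center_1_obtain_basis[OF assms])
  have coords: "\<exists>\<alpha> \<beta> w. w \<in> center \<and> br u v = \<alpha> *s d1 + \<beta> *s d2 + w" for u v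
  proof -
    obtain \<alpha> \<beta> w where "w \<in> span center" "br u v = \<alpha> *s d1 + \<beta> *s d2 + w"
      by (rule in_span_insert2E[of "br u v" d1 d2 center]) (simp add: derived)
    then show ?thesis
      by auto
  qed
  obtain a c w1 where w1: "w1 \<in> center" and ad1: "br x d1 = a *s d1 + c *s d2 + w1"
    using coords by blast
  obtain b e w2 where w2: "w2 \<in> center" and ad2: "br x d2 = b *s d1 + e *s d2 + w2"
    using coords by blast
  obtain f g w3 where w3: "w3 \<in> center" and d12: "br d1 d2 = f *s d1 + g *s d2 + w3"
    using coords by blast
  have "f = 0" "g = 0" "e = - a"
    using ad_traceless_mod_center[OF full assms(3) ad1 ad2 d12 w1 w2 w3] by simp_all
  then have ad2': "br x d2 = b *s d1 - a *s d2 + w2" and "br d1 d2 \<in> center"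
    using ad2 d12 w3 by simp_all
  moreover have "br d1 d2 \<noteq> 0"
    using derived_brackets_coeffs_zero[OF full assms(3), of 0 0 1] by auto
  moreover have "a * a + b * c \<noteq> 0"
    using ad_nondegenerate_mod_center[OF full assms(3,2) ad1 ad2' w1 w2] calculation by blast
  ultimately show ?thesis
    using diamond_basis_if_ad_nondegenerate[OF full assms(4,2) ad1 ad2' w1 w2] by blast
qed

end

lemma fin_dim_lie_algebraI:
  assumes "lie_algebra sc br" "fin_dim_space sc"
  obtains Basis where "fin_dim_lie_algebra sc Basis br"
proof -
  interpret vector_space sc
    using assms(1) unfolding lie_algebra_def by blast
  obtain S where "finite S" "span S = UNIV"
    using assms(2) unfolding fin_dim_space_def by blast
  moreover obtain B where "B \<subseteq> S" "independent B" "S \<subseteq> span B"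
    using maximal_independent_subset[of S] by blast
  ultimately have "finite B" "independent B" "span B = UNIV"
    using finite_subset span_mono[of S "span B"] by (auto simp: span_span)
  with assms(1) show ?thesis
    by (intro that[of B]) (simp add: fin_dim_lie_algebra_def fin_dim_lie_algebra_axioms_def
      finite_dimensional_vector_space_def finite_dimensional_vector_space_axioms_def lie_algebra_def)
qed

theorem theorem3p2:
  fixes sc :: "complex \<Rightarrow> 'a::ab_group_add \<Rightarrow> 'a" and br :: "'a \<Rightarrow> 'a \<Rightarrow> 'a"
  assumes "lie_algebra sc br"
    and "fin_dim_space sc"
    and "lie_pure sc br"
    and "\<not> lie_nilpotent sc br"
    and "lie_solvable sc br"
    and "lie_breadth sc br = 2"
    and "vector_space.dim sc (lie_br_set sc br UNIV UNIV) = 3"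
    and "vector_space.dim sc (UNIV :: 'a set) - vector_space.dim sc (lie_center br) = 3"
  shows "\<exists>x1 x2 x3 z.
           distinct [x1, x2, x3, z] \<and>
           \<not> module.dependent sc {x1, x2, x3, z} \<and>
           module.span sc {x1, x2, x3, z} = UNIV \<and>
           br x1 x2 = x2 \<and> br x1 x3 = - x3 \<and> br x2 x3 = z \<and>
           br x1 z = 0 \<and> br x2 z = 0 \<and> br x3 z = 0"
proof -
  obtain Basis where "fin_dim_lie_algebra sc Basis br"
    using fin_dim_lie_algebraI[OF assms(1,2)] by blast
  then interpret L: fin_dim_lie_algebra sc Basis br .
  have dim_UNIV: "L.dim (UNIV :: 'a set) = L.dim L.center + 3"
    using assms(8) L.dim_subset[of L.center UNIV] by simp
  then have "L.dim L.center = 1"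
    using L.dim_center_eq_1_or_2[OF assms(3-5,7)] L.dim_center_ne_2[OF assms(3,4,7)] by blast
  then obtain x1 x2 x3 z where "L.diamond_basis x1 x2 x3 z"
    using L.diamond_basis_if_dim_center_1[OF assms(3) _ assms(7)] dim_UNIV by auto
  then show ?thesis
    unfolding L.diamond_basis_def by blast
qed

end
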